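(* Let $d\in\mathbb N$, $\beta\in(1,\infty)$, $\theta\in[1,\infty]$, and let $K_r$ be as in the context. Then, with implicit constant independent of $r$, $$\|K_r\|_{\mathrm L^\theta(\mathbb R^{1+2d})}\lesssim r^{\mathsf Q(\frac1\theta-1)}\qquad\text{for all }r>0.$$
   Context: All $2\times2$ matrices act on $\mathbb R^{2d}$ as their tensor product with $\mathrm{Id}_d$. Let $g_1(r)=r^\beta\sin\log r$, $g_2(r)=r^\beta\cos\log r$, $\mathcal W(r)=\begin{pmatrix}g_1&g_2\\ \dot g_1&\dot g_2\end{pmatrix}(r)$, $\mathcal D_\delta=\mathrm{diag}(\mathrm{Id}_d,\delta\,\mathrm{Id}_d)$, $\mathcal A_{m_0}(r)=\mathcal D_{m_0}^{-1}\mathcal W(r)$ for $m_0\ne0$. Let $c_0:=(-1)^d$ and $\mathsf Q:=(2\beta-1)d+1$. Fix a nonnegative $\psi\in C_c^\infty(\mathbb R^{1+2d})$ with unit mass and support in $(-2,-1)\times B_1(0)\times B_1(0)$. For $r>0$, $$K_r(u_0,u_1,u_2)=c_0^{-1}r^{-\mathsf Q}\Bigl(\frac{u_0}{r}\Bigr)^d\psi\Bigl(\frac{u_0}{r},\mathcal A_{u_0/r}(r)^{-1}\binom{u_1}{u_2}\Bigr)$$ (set to $0$ when $u_0=0$). *)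

theory Defs
  imports "HOL-Analysis.Analysis" "HOL-Probability.Essential_Supremum"
begin

text \<open>Iterated directional (Frechet) derivatives; a function is C-infinity iff every
iterated derivative exists (is Frechet differentiable) everywhere.\<close>
fun dirderivs :: "'a::real_normed_vector list \<Rightarrow> ('a \<Rightarrow> real) \<Rightarrow> ('a \<Rightarrow> real)" where
  "dirderivs [] f = f"
| "dirderivs (v # vs) f = (\<lambda>x. frechet_derivative (dirderivs vs f) (at x) v)"

definition smooth_fun :: "('a::real_normed_vector \<Rightarrow> real) \<Rightarrow> bool" where
  "smooth_fun f \<longleftrightarrow> (\<forall>vs x. dirderivs vs f differentiable (at x))"

definition g1 :: "real \<Rightarrow> real \<Rightarrow> real" where
  "g1 \<beta> r = r powr \<beta> * sin (ln r)"

definition g2 :: "real \<Rightarrow> real \<Rightarrow> real" where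
  "g2 \<beta> r = r powr \<beta> * cos (ln r)"

definition Wmat :: "real \<Rightarrow> real \<Rightarrow> real^2^2" where
  "Wmat \<beta> r = vector [vector [g1 \<beta> r, g2 \<beta> r], vector [deriv (g1 \<beta>) r, deriv (g2 \<beta>) r]]"

definition Dmat :: "real \<Rightarrow> real^2^2" where
  "Dmat \<delta> = vector [vector [1, 0], vector [0, \<delta>]]"

definition Amat :: "real \<Rightarrow> real \<Rightarrow> real \<Rightarrow> real^2^2" where
  "Amat \<beta> m0 r = matrix_inv (Dmat m0) ** Wmat \<beta> r"

text \<open>Action of a 2x2 matrix on R^{2d} as its tensor product with Id_d.\<close>
definition blockact :: "real^2^2 \<Rightarrow> (real^'d) \<times> (real^'d) \<Rightarrow> (real^'d) \<times> (real^'d)" where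
  "blockact M u = (M$1$1 *\<^sub>R fst u + M$1$2 *\<^sub>R snd u, M$2$1 *\<^sub>R fst u + M$2$2 *\<^sub>R snd u)"

definition Qexp :: "real \<Rightarrow> nat \<Rightarrow> real" where
  "Qexp \<beta> d = (2 * \<beta> - 1) * real d + 1"

definition Kr :: "real \<Rightarrow> (real \<times> (real^'d) \<times> (real^'d) \<Rightarrow> real) \<Rightarrow> real
                   \<Rightarrow> real \<times> (real^'d) \<times> (real^'d) \<Rightarrow> real" where
  "Kr \<beta> \<psi> r u = (let d = CARD('d); u0 = fst u; c0 = (-1::real) ^ d in
     if u0 = 0 then 0
     else inverse c0 * r powr (- Qexp \<beta> d) * (u0 / r) ^ d *
          \<psi> (u0 / r, blockact (matrix_inv (Amat \<beta> (u0 / r) r)) (snd u)))"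

definition Lnorm :: "ereal \<Rightarrow> ('a::euclidean_space \<Rightarrow> real) \<Rightarrow> ereal" where
  "Lnorm p f = (if p = \<infinity> then esssup lborel (\<lambda>x. ereal \<bar>f x\<bar>)
     else (let I = (\<integral>\<^sup>+ x. ennreal (\<bar>f x\<bar> powr real_of_ereal p) \<partial>lborel) in
           if I = top then \<infinity> else ereal (enn2real I powr (1 / real_of_ereal p))))"

definition inv_exp :: "ereal \<Rightarrow> real" where
  "inv_exp p = (if p = \<infinity> then 0 else 1 / real_of_ereal p)"

end

theory Submission
  imports Defs
begin

(* Write s = u0/r and w = A_s(r)^-1 (u1, u2), so that W(r) w = (u1, s u2); W(r) is invertible
   since its Wronskian is -r^(2 beta - 1). Then K_r(u) = +-r^(-Q) s^d psi(s, w), and wherever this is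
   nonzero we have s in (-2,-1) and |w_1|, |w_2| < 1. With |g_i| <= r^beta and
   |g_i'| <= (beta + 1) r^(beta - 1), the support of K_r lies in a box of measure
   ~ r * r^(beta d) * r^((beta - 1) d) = r^Q, while |K_r| <~ r^(-Q) everywhere. Hence
   ||K_r||_theta <= ||K_r||_infinity |box|^(1/theta) <~ r^(Q (1/theta - 1)). *)

lemma matrix_inv_eq_right_inverse:
  fixes A B :: "'a::field^'n^'n"
  assumes "A ** B = mat 1"
  shows "matrix_inv A = B"
proof -
  have BA: "B ** A = mat 1"
    using assms matrix_left_right_inverse by blast
  with assms have "A ** matrix_inv A = mat 1"
    unfolding matrix_inv_def by (metis (mono_tags, lifting) someI)
  then show ?thesis
    by (metis BA matrix_mul_assoc matrix_mul_lid matrix_mul_rid)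
qed

lemma matrix_mul_matrix_inv:
  fixes A :: "'a::field^'n^'n"
  assumes "invertible A"
  shows "A ** matrix_inv A = mat 1"
  using assms matrix_inv_eq_right_inverse invertible_right_inverse by metis

lemma powr_mult_powr_minus_one: "x powr a * x powr (a - 1) = x powr (2 * a - 1)"
  for x :: real
  by (metis mult_2 add_diff_eq powr_add)

lemma norm_scaleR_add_le:
  fixes x y :: "'a::real_normed_vector"
  assumes "norm x \<le> 1" "norm y \<le> 1" "\<bar>a\<bar> \<le> A" "\<bar>b\<bar> \<le> A"
  shows "norm (a *\<^sub>R x + b *\<^sub>R y) \<le> 2 * A"
proof -
  have "norm (a *\<^sub>R x + b *\<^sub>R y) \<le> \<bar>a\<bar> * norm x + \<bar>b\<bar> * norm y"
    by (metis norm_scaleR norm_triangle_ineq)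
  also have "\<dots> \<le> \<bar>a\<bar> + \<bar>b\<bar>"
    using assms by (intro add_mono mult_left_le) auto
  finally show ?thesis
    using assms by linarith
qed

definition cube :: "real \<Rightarrow> 'a::euclidean_space set" where
  "cube a = cbox (- (a *\<^sub>R One)) (a *\<^sub>R One)"

lemma mem_cube_if_norm_le:
  fixes x :: "'a::euclidean_space"
  assumes "norm x \<le> a"
  shows "x \<in> cube a"
proof -
  have "- a \<le> x \<bullet> i \<and> x \<bullet> i \<le> a" if "i \<in> Basis" for i
    using Basis_le_norm[OF that, of x] assms by linarith
  then show ?thesis
    by (auto simp: cube_def mem_box inner_diff_left)
qed

lemma closed_cube: "closed (cube a)"
  by (simp add: cube_def closed_cbox)

lemma emeasure_cube:
  "a \<ge> 0 \<Longrightarrow> emeasure lborel (cube a :: 'a::euclidean_space set) = ennreal ((2 * a) ^ DIM('a))"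
  by (simp add: cube_def emeasure_lborel_cbox_eq inner_diff_left inner_add_left prod_constant power_mult_distrib)

lemma emeasure_lborel_Times:
  fixes A :: "'a::euclidean_space set" and B :: "'b::euclidean_space set"
  assumes "A \<in> sets borel" "B \<in> sets borel"
  shows "emeasure lborel (A \<times> B) = emeasure lborel A * emeasure lborel B"
  using assms by (simp add: lborel_prod [symmetric] lborel.emeasure_pair_measure_Times)

lemma bounded_range_if_bounded_support:
  fixes f :: "'a::euclidean_space \<Rightarrow> 'b::real_normed_vector"
  assumes "continuous_on UNIV f" "bounded (closure {x. f x \<noteq> 0})"
  shows "bounded (range f)"
proof -
  have "compact (f ` closure {x. f x \<noteq> 0})"
    using assms by (intro compact_continuous_image continuous_on_subset [OF assms(1)])
      (auto simp: compact_eq_bounded_closed)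
  moreover have "range f \<subseteq> insert 0 (f ` closure {x. f x \<noteq> 0})"
    using closure_subset by fastforce
  ultimately show ?thesis
    by (meson bounded_insert bounded_subset compact_imp_bounded)
qed

lemma smooth_fun_imp_continuous_on: "smooth_fun f \<Longrightarrow> continuous_on UNIV f"
  unfolding smooth_fun_def
  by (metis dirderivs.simps(1) differentiable_imp_continuous_within continuous_at_imp_continuous_on)

(* For p = infinity the bound reads B * m powr 0, which is B only because m > 0 (0 powr 0 = 0). *)
lemma Lnorm_le_if_bounded_by_indicator:
  fixes f :: "'a::euclidean_space \<Rightarrow> real"
  assumes p: "1 \<le> p" and f: "f \<in> borel_measurable lborel"
    and S: "S \<in> sets lborel" "emeasure lborel S = ennreal m" "0 < m"
    and B: "0 \<le> B" "\<And>x. \<bar>f x\<bar> \<le> B * indicator S x"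
  shows "Lnorm p f \<le> ereal (B * m powr inv_exp p)"
proof (cases "p = \<infinity>")
  case True
  have "\<bar>f x\<bar> \<le> B" for x
    using B(1) B(2)[of x] by (simp split: split_indicator_asm)
  then have "esssup lborel (\<lambda>x. ereal \<bar>f x\<bar>) \<le> ereal B"
    using f by (intro esssup_I) auto
  then show ?thesis
    using True S(3) by (simp add: Lnorm_def inv_exp_def)
next
  case False
  then obtain q where q: "p = ereal q" "1 \<le> q"
    using p by (cases p) auto
  define I where "I = (\<integral>\<^sup>+ x. ennreal (\<bar>f x\<bar> powr q) \<partial>lborel)"
  have "I \<le> (\<integral>\<^sup>+ x. ennreal (B powr q) * indicator S x \<partial>lborel)"
    unfolding I_def
  proof (rule nn_integral_mono)
    fix x
    show "ennreal (\<bar>f x\<bar> powr q) \<le> ennreal (B powr q) * indicator S x"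
      using B(2)[of x] q(2) by (auto intro!: ennreal_leI powr_mono2 split: split_indicator)
  qed
  also have "\<dots> = ennreal (B powr q * m)"
    using S B(1) by (simp add: nn_integral_cmult_indicator ennreal_mult)
  finally have I: "I \<le> ennreal (B powr q * m)" .
  then have "I \<noteq> top"
    using neq_top_trans by force
  have "enn2real I powr (1 / q) \<le> (B powr q * m) powr (1 / q)"
    using I q(2) S(3) B(1) by (intro powr_mono2 enn2real_leI) auto
  also have "\<dots> = B * m powr (1 / q)"
    using q(2) S(3) B(1) by (simp add: powr_mult powr_powr)
  finally show ?thesis
    using q \<open>I \<noteq> top\<close> by (simp add: Lnorm_def inv_exp_def Let_def I_def)
qed

lemma blockact_matrix_mul: "blockact (M ** N) u = blockact M (blockact N u)"
  by (simp add: blockact_def matrix_matrix_mult_def sum_2 algebra_simps)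

lemma blockact_Dmat: "blockact (Dmat s) u = (fst u, s *\<^sub>R snd u)"
  by (simp add: blockact_def Dmat_def)

lemma Dmat_mult: "Dmat a ** Dmat b = Dmat (a * b)"
  by (simp add: Dmat_def matrix_matrix_mult_def sum_2 vec_eq_iff forall_2)

lemma Dmat_1: "Dmat 1 = mat 1"
  by (simp add: Dmat_def mat_def vec_eq_iff forall_2)

lemma matrix_inv_Dmat: "s \<noteq> 0 \<Longrightarrow> matrix_inv (Dmat s) = Dmat (1 / s)"
  by (simp add: matrix_inv_eq_right_inverse Dmat_mult Dmat_1)

lemma has_real_derivative_g1:
  "r > 0 \<Longrightarrow> (g1 b has_real_derivative r powr (b - 1) * (b * sin (ln r) + cos (ln r))) (at r)"
  unfolding g1_def[abs_def]
  by (auto intro!: derivative_eq_intros simp: powr_diff algebra_simps)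

lemma has_real_derivative_g2:
  "r > 0 \<Longrightarrow> (g2 b has_real_derivative r powr (b - 1) * (b * cos (ln r) - sin (ln r))) (at r)"
  unfolding g2_def[abs_def]
  by (auto intro!: derivative_eq_intros simp: powr_diff algebra_simps)

lemma abs_g1_le: "r > 0 \<Longrightarrow> \<bar>g1 b r\<bar> \<le> r powr b"
  by (simp add: g1_def abs_mult mult_left_le)

lemma abs_g2_le: "r > 0 \<Longrightarrow> \<bar>g2 b r\<bar> \<le> r powr b"
  by (simp add: g2_def abs_mult mult_left_le)

lemma abs_deriv_g1_le:
  assumes "r > 0" "b \<ge> 0"
  shows "\<bar>deriv (g1 b) r\<bar> \<le> (b + 1) * r powr (b - 1)"
proof -
  have "\<bar>b * sin (ln r) + cos (ln r)\<bar> \<le> b + 1"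
  proof -
    have "\<bar>b * sin (ln r)\<bar> \<le> b"
      using assms abs_sin_le_one[of "ln r"] by (simp add: abs_mult mult_left_le)
    then show ?thesis
      using abs_triangle_ineq[of "b * sin (ln r)" "cos (ln r)"] abs_cos_le_one[of "ln r"] by linarith
  qed
  then show ?thesis
    using assms by (simp add: DERIV_imp_deriv[OF has_real_derivative_g1] abs_mult mult.commute mult_left_mono)
qed

lemma abs_deriv_g2_le:
  assumes "r > 0" "b \<ge> 0"
  shows "\<bar>deriv (g2 b) r\<bar> \<le> (b + 1) * r powr (b - 1)"
proof -
  have "\<bar>b * cos (ln r) - sin (ln r)\<bar> \<le> b + 1"
  proof -
    have "\<bar>b * cos (ln r)\<bar> \<le> b"
      using assms abs_cos_le_one[of "ln r"] by (simp add: abs_mult mult_left_le)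
    then show ?thesis
      using abs_triangle_ineq4[of "b * cos (ln r)" "sin (ln r)"] abs_sin_le_one[of "ln r"] by linarith
  qed
  then show ?thesis
    using assms by (simp add: DERIV_imp_deriv[OF has_real_derivative_g2] abs_mult mult.commute mult_left_mono)
qed

lemma det_Wmat:
  assumes "r > 0"
  shows "det (Wmat b r) = - (r powr (2 * b - 1))"
proof -
  let ?s = "sin (ln r)" and ?c = "cos (ln r)"
  have "det (Wmat b r) = g1 b r * deriv (g2 b) r - g2 b r * deriv (g1 b) r"
    by (simp add: det_2 Wmat_def)
  also have "\<dots> = r powr b * r powr (b - 1) * (?s * (b * ?c - ?s) - ?c * (b * ?s + ?c))"
    using assms by (simp add: DERIV_imp_deriv[OF has_real_derivative_g1]
        DERIV_imp_deriv[OF has_real_derivative_g2] g1_def g2_def algebra_simps)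
  also have "?s * (b * ?c - ?s) - ?c * (b * ?s + ?c) = -1"
    using sin_cos_squared_add[of "ln r"] by (simp add: algebra_simps power2_eq_square)
  finally show ?thesis
    by (simp add: powr_mult_powr_minus_one)
qed

lemma invertible_Wmat: "r > 0 \<Longrightarrow> invertible (Wmat b r)"
  by (simp add: invertible_det_nz det_Wmat)

lemma matrix_inv_Amat:
  assumes "r > 0" "s \<noteq> 0"
  shows "matrix_inv (Amat b s r) = matrix_inv (Wmat b r) ** Dmat s"
proof (rule matrix_inv_eq_right_inverse)
  have "Amat b s r ** (matrix_inv (Wmat b r) ** Dmat s)
      = Dmat (1 / s) ** (Wmat b r ** matrix_inv (Wmat b r)) ** Dmat s"
    using assms(2) by (simp add: Amat_def matrix_inv_Dmat matrix_mul_assoc)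
  also have "\<dots> = mat 1"
    using assms by (simp add: matrix_mul_matrix_inv invertible_Wmat matrix_mul_rid Dmat_mult Dmat_1)
  finally show "Amat b s r ** (matrix_inv (Wmat b r) ** Dmat s) = mat 1" .
qed

lemma blockact_Wmat_matrix_inv_Amat:
  assumes "r > 0" "s \<noteq> 0"
  shows "blockact (Wmat b r) (blockact (matrix_inv (Amat b s r)) u) = (fst u, s *\<^sub>R snd u)"
proof -
  have "Wmat b r ** (matrix_inv (Wmat b r) ** Dmat s) = Dmat s"
    using assms(1) by (metis matrix_mul_assoc matrix_mul_matrix_inv invertible_Wmat matrix_mul_lid)
  then show ?thesis
    using assms by (simp add: matrix_inv_Amat blockact_matrix_mul [symmetric] blockact_Dmat)
qed

definition Kr_box :: "real \<Rightarrow> real \<Rightarrow> (real \<times> (real^'d) \<times> (real^'d)) set" where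
  "Kr_box b r = {-2 * r .. -r} \<times> cube (2 * r powr b) \<times> cube (2 * ((b + 1) * r powr (b - 1)))"

lemma Kr_box_in_borel: "Kr_box b r \<in> sets borel"
  unfolding Kr_box_def by (intro borel_closed closed_Times closed_cube) auto

lemma emeasure_Kr_box:
  assumes r: "r > 0" and b: "b \<ge> 0"
  shows "emeasure lborel (Kr_box b r :: (real \<times> (real^'d) \<times> (real^'d)) set)
    = ennreal ((16 * (b + 1)) ^ CARD('d) * r powr Qexp b CARD('d))"
proof -
  let ?d = "CARD('d)"
  have "emeasure lborel (Kr_box b r :: (real \<times> (real^'d) \<times> (real^'d)) set)
      = emeasure lborel {-2 * r .. -r} * (emeasure lborel (cube (2 * r powr b) :: (real^'d) set)
          * emeasure lborel (cube (2 * ((b + 1) * r powr (b - 1))) :: (real^'d) set))"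
    by (simp add: Kr_box_def emeasure_lborel_Times borel_closed closed_Times closed_cube)
  also have "\<dots> = ennreal (r * ((4 * r powr b) ^ ?d * (4 * ((b + 1) * r powr (b - 1))) ^ ?d))"
    using assms by (simp add: emeasure_cube ennreal_mult)
  also have "(16 * (b + 1)) ^ ?d = 4 ^ ?d * (4 ^ ?d * (b + 1) ^ ?d)"
    by (simp flip: power_mult_distrib)
  then have "r * ((4 * r powr b) ^ ?d * (4 * ((b + 1) * r powr (b - 1))) ^ ?d)
      = (16 * (b + 1)) ^ ?d * (r * (r powr b * r powr (b - 1)) ^ ?d)"
    by (simp add: power_mult_distrib mult_ac)
  also have "r * (r powr b * r powr (b - 1)) ^ ?d = r powr Qexp b ?d"
  proof -
    have "Qexp b ?d = 1 + real ?d * (2 * b - 1)"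
      by (simp add: Qexp_def algebra_simps)
    then show ?thesis
      using r by (simp add: powr_mult_powr_minus_one powr_add powr_power [symmetric])
  qed
  finally show ?thesis .
qed

lemma mem_Kr_box:
  fixes u1 u2 :: "real^'d"
  assumes r: "r > 0" and b: "b \<ge> 0" and s: "u0 / r \<in> {-2<..< -1}"
    and w: "norm (fst w) \<le> 1" "norm (snd w) \<le> 1"
    and W: "blockact (Wmat b r) w = (u1, (u0 / r) *\<^sub>R u2)"
  shows "(u0, u1, u2) \<in> Kr_box b r"
proof -
  have u1: "u1 = g1 b r *\<^sub>R fst w + g2 b r *\<^sub>R snd w"
    and u2: "(u0 / r) *\<^sub>R u2 = deriv (g1 b) r *\<^sub>R fst w + deriv (g2 b) r *\<^sub>R snd w"
    using W by (simp_all add: blockact_def Wmat_def)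
  have "norm u1 \<le> 2 * r powr b"
    unfolding u1 using r by (intro norm_scaleR_add_le w abs_g1_le abs_g2_le)
  moreover have "norm u2 \<le> norm ((u0 / r) *\<^sub>R u2)"
  proof -
    have "1 \<le> \<bar>u0 / r\<bar>"
    proof -
      have "u0 / r < -1"
        using s by simp
      then show ?thesis
        using abs_ge_minus_self[of "u0 / r"] by linarith
    qed
    then show ?thesis
      using mult_right_mono[of 1 "\<bar>u0 / r\<bar>" "norm u2"] by simp
  qed
  moreover have "norm ((u0 / r) *\<^sub>R u2) \<le> 2 * ((b + 1) * r powr (b - 1))"
    unfolding u2 using r b by (intro norm_scaleR_add_le w abs_deriv_g1_le abs_deriv_g2_le)
  moreover have "u0 \<in> {-2 * r .. -r}"
    using s r by (simp add: field_simps)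
  ultimately show ?thesis
    by (simp add: Kr_box_def mem_cube_if_norm_le)
qed

lemma abs_Kr_le:
  fixes \<psi> :: "real \<times> (real^'d) \<times> (real^'d) \<Rightarrow> real"
  assumes r: "r > 0" and b: "0 \<le> b" and M: "\<And>x. \<bar>\<psi> x\<bar> \<le> M"
    and supp: "closure {x. \<psi> x \<noteq> 0} \<subseteq> {-2<..< -1} \<times> ball 0 1 \<times> ball 0 1"
  shows "\<bar>Kr b \<psi> r u\<bar> \<le> 2 ^ CARD('d) * M * r powr (- Qexp b CARD('d)) * indicator (Kr_box b r) u"
proof (cases "Kr b \<psi> r u = 0")
  case True
  have "0 \<le> M"
    using M[of u] by linarith
  with True show ?thesis
    by simp
next
  case False
  obtain u0 u1 u2 where u: "u = (u0, u1, u2)"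
    by (cases u) auto
  define s where "s = u0 / r"
  define w where "w = blockact (matrix_inv (Amat b s r)) (u1, u2)"
  have K0: "Kr b \<psi> r u = (if u0 = 0 then 0
      else inverse ((-1) ^ CARD('d)) * r powr (- Qexp b CARD('d)) * s ^ CARD('d) * \<psi> (s, w))"
    by (simp add: Kr_def Let_def u s_def w_def)
  have u0: "u0 \<noteq> 0"
    using False K0 by auto
  then have K: "Kr b \<psi> r u = inverse ((-1) ^ CARD('d)) * r powr (- Qexp b CARD('d)) * s ^ CARD('d) * \<psi> (s, w)"
    using K0 by simp
  then have "\<psi> (s, w) \<noteq> 0"
    using False by auto
  then have "(s, w) \<in> closure {x. \<psi> x \<noteq> 0}"
    by (intro subsetD [OF closure_subset]) simp
  then have "(s, w) \<in> {-2<..< -1} \<times> ball 0 1 \<times> ball 0 1"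
    using supp by (rule subsetD [rotated])
  then have s: "s \<in> {-2<..< -1}" and w: "norm (fst w) \<le> 1" "norm (snd w) \<le> 1"
    by (simp_all add: mem_Times_iff less_imp_le)
  have W: "blockact (Wmat b r) w = (u1, s *\<^sub>R u2)"
    using r u0 by (simp add: w_def s_def blockact_Wmat_matrix_inv_Amat)
  have "u \<in> Kr_box b r"
    unfolding u using mem_Kr_box [OF r b s [unfolded s_def] w W [unfolded s_def]] .
  have "\<bar>Kr b \<psi> r u\<bar> = r powr (- Qexp b CARD('d)) * (\<bar>s\<bar> ^ CARD('d) * \<bar>\<psi> (s, w)\<bar>)"
    by (simp add: K abs_mult power_abs)
  also have "\<dots> \<le> r powr (- Qexp b CARD('d)) * (2 ^ CARD('d) * M)"
    using s M by (intro mult_left_mono mult_mono power_mono) auto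
  finally show ?thesis
    using \<open>u \<in> Kr_box b r\<close> by (simp add: mult_ac)
qed

lemma borel_measurable_Kr:
  fixes \<psi> :: "real \<times> (real^'d) \<times> (real^'d) \<Rightarrow> real"
  assumes r: "r > 0" and \<psi>: "continuous_on UNIV \<psi>"
  shows "Kr b \<psi> r \<in> borel_measurable lborel"
proof -
  define N where "N = matrix_inv (Wmat b r)"
  define F where "F u = inverse ((-1) ^ CARD('d)) * r powr (- Qexp b CARD('d)) * (fst u / r) ^ CARD('d)
      * \<psi> (fst u / r, blockact N (fst (snd u), (fst u / r) *\<^sub>R snd (snd u)))"
    for u :: "real \<times> (real^'d) \<times> (real^'d)"
  have Kr: "Kr b \<psi> r = (\<lambda>u. if fst u = 0 then 0 else F u)"
    using r by (auto simp: fun_eq_iff Kr_def Let_def F_def N_def matrix_inv_Amat blockact_matrix_mul blockact_Dmat)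
  have "continuous_on UNIV (\<lambda>u::real \<times> (real^'d) \<times> (real^'d).
      \<psi> (fst u / r, blockact N (fst (snd u), (fst u / r) *\<^sub>R snd (snd u))))"
    using r by (intro continuous_on_compose2 [OF \<psi>]) (auto simp: blockact_def intro!: continuous_intros)
  then have "continuous_on UNIV F"
    unfolding F_def using r by (auto intro!: continuous_intros)
  then have "F \<in> borel_measurable lborel"
    using borel_measurable_continuous_onI by simp
  moreover have "{u \<in> space lborel. fst u = (0::real)} \<in> sets (lborel :: (real \<times> (real^'d) \<times> (real^'d)) measure)"
    by (simp add: closed_Collect_eq continuous_on_fst)
  ultimately show ?thesis
    unfolding Kr by (intro measurable_If) auto
qed

(* Only the continuity and the support of psi matter. *)
theorem corollary2p6:
  fixes \<beta> :: real and \<theta> :: ereal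
    and \<psi> :: "real \<times> (real^'d) \<times> (real^'d) \<Rightarrow> real"
  assumes "1 < \<beta>" and "1 \<le> \<theta>"
    and "smooth_fun \<psi>" and "\<forall>x. 0 \<le> \<psi> x" and "(\<psi> has_integral 1) UNIV"
    and "closure {x. \<psi> x \<noteq> 0} \<subseteq> {-2<..< -1} \<times> ball 0 1 \<times> ball 0 1"
  shows "\<exists>C. \<forall>r>0. Lnorm \<theta> (Kr \<beta> \<psi> r)
                    \<le> ereal (C * r powr (Qexp \<beta> CARD('d) * (inv_exp \<theta> - 1)))"
proof -
  let ?Q = "Qexp \<beta> CARD('d)" and ?e = "inv_exp \<theta>"
  have \<psi>: "continuous_on UNIV \<psi>"
    using assms(3) by (rule smooth_fun_imp_continuous_on)
  have "bounded (closure {x. \<psi> x \<noteq> 0})"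
    using assms(6) by (rule bounded_subset [rotated]) (intro bounded_Times; simp)
  then obtain M where M: "\<And>x. \<bar>\<psi> x\<bar> \<le> M"
    using bounded_range_if_bounded_support [OF \<psi>] by (auto simp: bounded_iff)
  then have "0 \<le> M"
    by (meson abs_ge_zero order_trans)
  define V where "V = (16 * (\<beta> + 1)) ^ CARD('d)"
  have "V > 0"
    using assms(1) by (simp add: V_def)
  show ?thesis
  proof (intro exI allI impI)
    fix r :: real
    assume r: "r > 0"
    have "\<bar>Kr \<beta> \<psi> r u\<bar> \<le> 2 ^ CARD('d) * M * r powr - ?Q * indicator (Kr_box \<beta> r) u" for u
      using assms(1,6) r M by (intro abs_Kr_le) auto
    moreover have "emeasure lborel (Kr_box \<beta> r :: (real \<times> (real^'d) \<times> (real^'d)) set) = ennreal (V * r powr ?Q)"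
      using assms(1) r by (simp add: emeasure_Kr_box V_def)
    ultimately have "Lnorm \<theta> (Kr \<beta> \<psi> r) \<le> ereal (2 ^ CARD('d) * M * r powr - ?Q * (V * r powr ?Q) powr ?e)"
      using assms(2) r \<open>0 \<le> M\<close> \<open>V > 0\<close>
      by (intro Lnorm_le_if_bounded_by_indicator borel_measurable_Kr \<psi>) (auto simp: Kr_box_in_borel)
    also have "\<dots> = ereal (2 ^ CARD('d) * M * V powr ?e * r powr (?Q * (?e - 1)))"
      using r \<open>V > 0\<close> by (simp add: powr_mult powr_powr powr_add [symmetric] algebra_simps)
    finally show "Lnorm \<theta> (Kr \<beta> \<psi> r) \<le> ereal (2 ^ CARD('d) * M * V powr ?e * r powr (?Q * (?e - 1)))" .
  qed
qed

end
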